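(* Let $n\ge 2$ and let $\mathcal{A}$ be an antichain in $Q(P_n)$. Then there exists an antichain $\mathcal{A}'$ contained in \[ Q'(P_n)=\bigcup_{\frac{n-1}{4}<r<\frac{n+2}{3}} Q^{(r)}(P_n) \] with $|\mathcal{A}|\le|\mathcal{A}'|$.
   Context: $Q(P_n)$ is the family of subsets of $[n]=\{1,\dots,n\}$ containing no two consecutive integers, and $Q^{(r)}(P_n)$ its members of size $r$ (the union is over integers $r$). An antichain is a subfamily in which no member is a proper subset of another. *)

theory Defs
  imports Complex_Main
begin

definition Q :: "nat \<Rightarrow> nat set set" where
  "Q n = {S. S \<subseteq> {1..n} \<and> (\<forall>i\<in>S. Suc i \<notin> S)}"

definition Q_level :: "nat \<Rightarrow> nat \<Rightarrow> nat set set" where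
  "Q_level n r = {S \<in> Q n. card S = r}"

definition Q' :: "nat \<Rightarrow> nat set set" where
  "Q' n = (\<Union>r\<in>{r::nat. (real n - 1) / 4 < real r \<and> real r < (real n + 2) / 3}. Q_level n r)"

definition antichain_fam :: "'a set set \<Rightarrow> bool" where
  "antichain_fam F \<longleftrightarrow> (\<forall>A\<in>F. \<forall>B\<in>F. \<not> A \<subset> B)"

end

theory Submission
  imports Defs
begin

text \<open>
  A shifting argument based on a local normalized matching property of the levels of Q(P_n).
  Let X be a family of r-sets in Q(P_n). If 4r + 1 \<le> n, every member of X has at least
  n - 3r \<ge> r + 1 one-point extensions inside Q(P_n), while every (r+1)-set has only r + 1
  one-point restrictions, so double counting shows that the upper shade of X in Q(P_n) is at
  least as large as X. Dually, if 3r \<ge> n + 2, an (r-1)-set of Q(P_n) has at most r one-point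
  extensions inside Q(P_n), so the shadow of X is at least as large as X. Replacing the lowest
  level of an antichain by its upper shade, or the highest level by its shadow, yields an
  antichain that is no smaller; iterating moves every member into the levels
  (n - 1)/4 < r < (n + 2)/3.
\<close>

lemma card_le_card_by_double_counting:
  fixes R :: "'a \<Rightarrow> 'b \<Rightarrow> bool"
  assumes "finite X" "finite Y" "0 < k"
    and out: "\<And>x. x \<in> X \<Longrightarrow> k \<le> card {y\<in>Y. R x y}"
    and inc: "\<And>y. y \<in> Y \<Longrightarrow> card {x\<in>X. R x y} \<le> k"
  shows "card X \<le> card Y"
proof -
  have "k * card X = (\<Sum>x\<in>X. k)" by simp
  also have "\<dots> \<le> (\<Sum>x\<in>X. card {y\<in>Y. R x y})" by (rule sum_mono) (rule out)
  also have "\<dots> = (\<Sum>x\<in>X. \<Sum>y\<in>Y. if R x y then 1 else 0)"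
    using assms(2) by (simp add: sum.If_cases Int_def)
  also have "\<dots> = (\<Sum>y\<in>Y. \<Sum>x\<in>X. if R x y then 1 else 0)" by (rule sum.swap)
  also have "\<dots> = (\<Sum>y\<in>Y. card {x\<in>X. R x y})"
    using assms(1) by (simp add: sum.If_cases Int_def)
  also have "\<dots> \<le> (\<Sum>y\<in>Y. k)" by (rule sum_mono) (rule inc)
  also have "\<dots> = k * card Y" by simp
  finally show ?thesis using \<open>0 < k\<close> by simp
qed

lemma card_le_card_exchange:
  assumes "finite A" "finite U" "card {a\<in>A. P a} \<le> card U" "{a\<in>A. \<not> P a} \<inter> U = {}"
  shows "card A \<le> card ({a\<in>A. \<not> P a} \<union> U)"
proof -
  have "card A = card {a\<in>A. P a} + card {a\<in>A. \<not> P a}"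
    using assms(1) by (subst card_Un_disjoint[symmetric]) (auto intro: arg_cong[where f = card])
  also have "\<dots> \<le> card U + card {a\<in>A. \<not> P a}" using assms(3) by simp
  also have "\<dots> = card ({a\<in>A. \<not> P a} \<union> U)" using assms by (simp add: card_Un_disjoint)
  finally show ?thesis .
qed

lemma subset_card_Suc_obtains_remove:
  assumes "finite b" "a \<subseteq> b" "card b = Suc (card a)"
  obtains x where "x \<in> b" "a = b - {x}"
proof -
  have "card (b - a) = 1"
    using assms by (simp add: card_Diff_subset finite_subset)
  then obtain x where "b - a = {x}" by (rule card_1_singletonE)
  then show ?thesis using assms(2) that by blast
qed

lemma div2_le_card_if_closed_under_minus_two:
  fixes b :: "nat set"
  assumes "finite b" "m \<in> b" "\<forall>t\<in>b. 2 \<le> t \<longrightarrow> t - 2 \<in> b"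
  shows "(m + 1) div 2 \<le> card b"
proof -
  have mem: "2 * j < m \<Longrightarrow> m - 2 * j \<in> b" for j
  proof (induction j)
    case 0 then show ?case using assms(2) by simp
  next
    case (Suc j)
    then have "m - 2 * j \<in> b" "2 \<le> m - 2 * j" by simp_all
    then have "m - 2 * j - 2 \<in> b" using assms(3) by blast
    then show ?case by (simp add: diff_diff_add)
  qed
  have "inj_on (\<lambda>j. m - 2 * j) {..<(m + 1) div 2}"
    by (rule inj_onI) auto
  moreover have "(\<lambda>j. m - 2 * j) ` {..<(m + 1) div 2} \<subseteq> b"
    using mem by auto
  ultimately show ?thesis
    using card_inj_on_le[OF _ _ assms(1)] by fastforce
qed

lemma antichain_replace_level_up:
  assumes anti: "antichain_fam A" and low: "\<forall>a\<in>A. r \<le> card a"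
    and U: "\<forall>b\<in>U. card b = Suc r \<and> (\<exists>a\<in>A. card a = r \<and> a \<subseteq> b)"
  shows "antichain_fam ({a\<in>A. card a \<noteq> r} \<union> U)" and "{a\<in>A. card a \<noteq> r} \<inter> U = {}"
proof -
  show "antichain_fam ({a\<in>A. card a \<noteq> r} \<union> U)"
    unfolding antichain_fam_def
  proof (intro ballI notI)
    fix c d assume c: "c \<in> {a\<in>A. card a \<noteq> r} \<union> U" and d: "d \<in> {a\<in>A. card a \<noteq> r} \<union> U"
      and cd: "c \<subset> d"
    show False
    proof (cases "d \<in> U")
      case True
      then have "card d = Suc r" using U by auto
      then have "card c < card d"
        using psubset_card_mono[OF _ cd] card_ge_0_finite by force
      moreover have "Suc r \<le> card c"
        using c low U by (auto simp: Suc_le_eq order_less_le)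
      ultimately show False using \<open>card d = Suc r\<close> by simp
    next
      case False
      then have "d \<in> A" using d by auto
      obtain a where "a \<in> A" "a \<subseteq> c"
        using c U by auto
      then have "a \<subset> d" using cd by auto
      then show False using anti \<open>a \<in> A\<close> \<open>d \<in> A\<close> unfolding antichain_fam_def by auto
    qed
  qed
  show "{a\<in>A. card a \<noteq> r} \<inter> U = {}"
  proof (rule equals0I)
    fix b assume b: "b \<in> {a\<in>A. card a \<noteq> r} \<inter> U"
    then obtain a where "a \<in> A" "card a = r" "a \<subseteq> b" using U by auto
    with b have "a \<subset> b" by auto
    with b \<open>a \<in> A\<close> show False using anti unfolding antichain_fam_def by auto
  qed
qed

lemma antichain_replace_level_down:
  assumes anti: "antichain_fam A" and high: "\<forall>a\<in>A. finite a \<and> card a \<le> r"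
    and D: "\<forall>b\<in>D. Suc (card b) = r \<and> (\<exists>a\<in>A. card a = r \<and> b \<subseteq> a)"
  shows "antichain_fam ({a\<in>A. card a \<noteq> r} \<union> D)" and "{a\<in>A. card a \<noteq> r} \<inter> D = {}"
proof -
  show "antichain_fam ({a\<in>A. card a \<noteq> r} \<union> D)"
    unfolding antichain_fam_def
  proof (intro ballI notI)
    fix c d assume c: "c \<in> {a\<in>A. card a \<noteq> r} \<union> D" and d: "d \<in> {a\<in>A. card a \<noteq> r} \<union> D"
      and cd: "c \<subset> d"
    show False
    proof (cases "c \<in> D")
      case True
      then have "Suc (card c) = r" using D by auto
      moreover have "finite d" "card d < r"
        using d high D \<open>Suc (card c) = r\<close> by (auto simp: order_less_le dest: finite_subset)
      ultimately show False using psubset_card_mono[OF _ cd] by simp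
    next
      case False
      then have "c \<in> A" using c by auto
      obtain a where "a \<in> A" "d \<subseteq> a"
        using d D by auto
      then have "c \<subset> a" using cd by auto
      then show False using anti \<open>a \<in> A\<close> \<open>c \<in> A\<close> unfolding antichain_fam_def by auto
    qed
  qed
  show "{a\<in>A. card a \<noteq> r} \<inter> D = {}"
  proof (rule equals0I)
    fix b assume b: "b \<in> {a\<in>A. card a \<noteq> r} \<inter> D"
    then obtain a where "a \<in> A" "card a = r" "b \<subseteq> a" using D by auto
    with b have "b \<subset> a" by auto
    with b \<open>a \<in> A\<close> show False using anti unfolding antichain_fam_def by auto
  qed
qed

lemma finite_Q: "finite (Q n)"
  by (rule finite_subset[of _ "Pow {1..n}"]) (auto simp: Q_def)

lemma Q_subset_atLeastAtMost: "a \<in> Q n \<Longrightarrow> a \<subseteq> {1..n}"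
  by (simp add: Q_def)

lemma finite_mem_Q: "a \<in> Q n \<Longrightarrow> finite a"
  using Q_subset_atLeastAtMost finite_subset by blast

lemma card_mem_Q_le: "a \<in> Q n \<Longrightarrow> card a \<le> n"
  using card_mono[OF _ Q_subset_atLeastAtMost] by fastforce

lemma Q_downward_closed: "a \<in> Q n \<Longrightarrow> b \<subseteq> a \<Longrightarrow> b \<in> Q n"
  by (auto simp: Q_def)

definition addable :: "nat \<Rightarrow> nat set \<Rightarrow> nat set" where
  "addable n a = {x. x \<notin> a \<and> insert x a \<in> Q n}"

lemma mem_addable:
  assumes "a \<in> Q n"
  shows "x \<in> addable n a \<longleftrightarrow> x \<in> {1..n} \<and> x \<notin> a \<and> Suc x \<notin> a \<and> x \<notin> Suc ` a"
  using assms by (auto simp: addable_def Q_def)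

lemma finite_addable: "finite (addable n a)"
  by (rule finite_subset[of _ "{1..n}"]) (auto simp: addable_def Q_def)

lemma card_addable_ge:
  assumes "a \<in> Q n"
  shows "n - 3 * card a \<le> card (addable n a)"
proof -
  let ?N = "a \<union> Suc ` a \<union> (\<lambda>y. y - 1) ` a"
  have "card ?N \<le> card a + card (Suc ` a) + card ((\<lambda>y. y - 1) ` a)"
    by (meson card_Un_le add_le_mono le_trans order_refl)
  also have "\<dots> \<le> 3 * card a"
    using card_image_le[OF finite_mem_Q[OF assms], of Suc]
      card_image_le[OF finite_mem_Q[OF assms], of "\<lambda>y. y - 1"] by linarith
  finally have "n - 3 * card a \<le> card ({1..n} - ?N)"
    using card_Diff_subset_Int diff_card_le_card_Diff[of ?N "{1..n}"] finite_mem_Q[OF assms] by simp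
  also have "\<dots> \<le> card (addable n a)"
  proof (rule card_mono[OF finite_addable], rule subsetI)
    fix x assume "x \<in> {1..n} - ?N"
    moreover have "Suc x \<notin> a"
      using \<open>x \<in> {1..n} - ?N\<close> by (metis DiffD2 UnI2 diff_Suc_1 image_eqI)
    ultimately show "x \<in> addable n a" using assms by (simp add: mem_addable)
  qed
  finally show ?thesis .
qed

lemma card_addable_le:
  assumes b: "b \<in> Q n" and k: "card b = k" "1 \<le> k" "n \<le> 3 * k + 1"
  shows "card (addable n b) \<le> Suc k"
proof -
  let ?G = "{1..Suc n} - (b \<union> Suc ` b)"
  have fb: "finite b" using finite_mem_Q[OF b] .
  have "card (b \<union> Suc ` b) = 2 * k"
    using b fb k(1) by (subst card_Un_disjoint) (auto simp: Q_def card_image)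
  moreover have "b \<union> Suc ` b \<subseteq> {1..Suc n}" using b by (auto simp: Q_def)
  ultimately have cG: "card ?G = Suc n - 2 * k" by (simp add: card_Diff_subset fb)
  have sub: "addable n b \<subseteq> ?G" using b by (auto simp: mem_addable)
  show ?thesis
  proof (cases "n \<le> 3 * k")
    case True
    then show ?thesis using card_mono[OF _ sub] cG by simp
  next
    case False
    then have n: "n = 3 * k + 1" using k by simp
    \<comment> \<open>?G has k + 2 points, so one of them must be shown non-addable: n + 1, or the
      point just below a gap in b, unless b contains n, n - 2, n - 4, \<dots> and is too large.\<close>
    have "\<exists>p \<in> ?G. p \<notin> addable n b"
    proof (cases "n \<in> b")
      case False
      then show ?thesis
        using b by (intro bexI[of _ "Suc n"]) (auto simp: mem_addable Q_def)
    next
      case True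
      show ?thesis
      proof (cases "\<exists>t\<in>b. 2 \<le> t \<and> t - 2 \<notin> b")
        case True
        then obtain t where t: "t \<in> b" "2 \<le> t" "t - 2 \<notin> b" by blast
        have "t - 1 \<notin> b" "t \<le> n" using b t by (auto simp: Q_def dest: bspec[of _ _ "t - 1"])
        moreover have "t - 1 \<notin> Suc ` b"
        proof
          assume "t - 1 \<in> Suc ` b"
          then obtain y where "y \<in> b" "t - 1 = Suc y" by blast
          then show False using t by (metis diff_Suc_1 diff_diff_left one_add_one)
        qed
        ultimately show ?thesis
          using b t by (intro bexI[of _ "t - 1"]) (auto simp: mem_addable)
      next
        case False
        then have "(n + 1) div 2 \<le> k"
          using div2_le_card_if_closed_under_minus_two[OF fb \<open>n \<in> b\<close>] k(1) by blast
        then show ?thesis using n k(2) by simp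
      qed
    qed
    then obtain p where "p \<in> ?G" "addable n b \<subseteq> ?G - {p}" using sub by blast
    then have "card (addable n b) \<le> card ?G - 1"
      using card_mono[of "?G - {p}" "addable n b"] by simp
    then show ?thesis using cG n by simp
  qed
qed

definition upper_shade :: "nat \<Rightarrow> nat set set \<Rightarrow> nat set set" where
  "upper_shade n X = {b \<in> Q n. \<exists>a\<in>X. a \<subseteq> b \<and> card b = Suc (card a)}"

definition shadow :: "'a set set \<Rightarrow> 'a set set" where
  "shadow X = {b. \<exists>a\<in>X. b \<subseteq> a \<and> Suc (card b) = card a}"

lemma finite_upper_shade: "finite (upper_shade n X)"
  using finite_Q by (simp add: upper_shade_def)

lemma card_upper_shade_ge:
  assumes X: "X \<subseteq> Q n" "\<forall>a\<in>X. card a = r" and nr: "4 * r + 1 \<le> n"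
  shows "card X \<le> card (upper_shade n X)"
proof (rule card_le_card_by_double_counting[where R = "(\<subseteq>)" and k = "Suc r"])
  show "finite X" using X(1) finite_Q finite_subset by blast
  show "finite (upper_shade n X)" by (rule finite_upper_shade)
next
  fix a assume a: "a \<in> X"
  then have aQ: "a \<in> Q n" using X by blast
  have "inj_on (\<lambda>x. insert x a) (addable n a)"
    by (rule inj_onI) (auto simp: addable_def)
  moreover have "(\<lambda>x. insert x a) ` addable n a \<subseteq> {b \<in> upper_shade n X. a \<subseteq> b}"
  proof (rule image_subsetI)
    fix x assume "x \<in> addable n a"
    then have "insert x a \<in> Q n" "card (insert x a) = Suc (card a)"
      using finite_mem_Q[OF aQ] by (auto simp: addable_def)
    then show "insert x a \<in> {b \<in> upper_shade n X. a \<subseteq> b}"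
      using a unfolding upper_shade_def by blast
  qed
  moreover have "finite {b \<in> upper_shade n X. a \<subseteq> b}"
    using finite_upper_shade by simp
  ultimately have "card (addable n a) \<le> card {b \<in> upper_shade n X. a \<subseteq> b}"
    by (rule card_inj_on_le)
  moreover have "n - 3 * r \<le> card (addable n a)" using card_addable_ge[OF aQ] a X by simp
  ultimately show "Suc r \<le> card {b \<in> upper_shade n X. a \<subseteq> b}" using nr by linarith
next
  fix b assume b: "b \<in> upper_shade n X"
  then have cb: "card b = Suc r" and fb: "finite b"
    using X by (auto simp: upper_shade_def dest: finite_mem_Q)
  have sub: "{a \<in> X. a \<subseteq> b} \<subseteq> (\<lambda>x. b - {x}) ` b"
  proof
    fix a assume "a \<in> {a \<in> X. a \<subseteq> b}"
    then obtain x where "x \<in> b" "a = b - {x}"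
      using subset_card_Suc_obtains_remove[OF fb] cb X by (metis (mono_tags, lifting) mem_Collect_eq)
    then show "a \<in> (\<lambda>x. b - {x}) ` b" by blast
  qed
  have "card {a \<in> X. a \<subseteq> b} \<le> card ((\<lambda>x. b - {x}) ` b)"
    using card_mono[OF _ sub] fb by blast
  also have "\<dots> \<le> Suc r" using card_image_le[OF fb] cb by metis
  finally show "card {a \<in> X. a \<subseteq> b} \<le> Suc r" .
qed simp

lemma shadow_subset_Q: "X \<subseteq> Q n \<Longrightarrow> shadow X \<subseteq> Q n"
  by (auto simp: shadow_def intro: Q_downward_closed)

lemma card_shadow_ge:
  assumes X: "X \<subseteq> Q n" "\<forall>a\<in>X. card a = r" and nr: "n + 2 \<le> 3 * r" and "2 \<le> n"
  shows "card X \<le> card (shadow X)"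
proof (rule card_le_card_by_double_counting[where R = "\<lambda>a b. b \<subseteq> a" and k = r])
  show "finite X" using X(1) finite_Q finite_subset by blast
  show "finite (shadow X)" using shadow_subset_Q[OF X(1)] finite_Q finite_subset by blast
  show "0 < r" using nr \<open>2 \<le> n\<close> by simp
next
  fix a assume a: "a \<in> X"
  then have fa: "finite a" using X finite_mem_Q by blast
  have "inj_on (\<lambda>x. a - {x}) a"
    by (rule inj_onI) blast
  moreover have "(\<lambda>x. a - {x}) ` a \<subseteq> {b \<in> shadow X. b \<subseteq> a}"
  proof (rule image_subsetI)
    fix x assume "x \<in> a"
    then have "Suc (card (a - {x})) = card a" using fa card.remove by force
    then show "a - {x} \<in> {b \<in> shadow X. b \<subseteq> a}"
      using a unfolding shadow_def by blast
  qed
  moreover have "finite {b \<in> shadow X. b \<subseteq> a}"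
    using shadow_subset_Q[OF X(1)] finite_Q finite_subset by fastforce
  ultimately have "card a \<le> card {b \<in> shadow X. b \<subseteq> a}"
    by (rule card_inj_on_le)
  then show "r \<le> card {b \<in> shadow X. b \<subseteq> a}" using a X by simp
next
  fix b assume b: "b \<in> shadow X"
  then have bQ: "b \<in> Q n" and cb: "Suc (card b) = r"
    using shadow_subset_Q[OF X(1)] X(2) by (auto simp: shadow_def)
  have sub: "{a \<in> X. b \<subseteq> a} \<subseteq> (\<lambda>x. insert x b) ` addable n b"
  proof
    fix a assume a: "a \<in> {a \<in> X. b \<subseteq> a}"
    then have "a \<in> Q n" "finite a" "card a = Suc (card b)"
      using X cb finite_mem_Q by auto
    then obtain x where "x \<in> a" "b = a - {x}"
      using subset_card_Suc_obtains_remove a by blast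
    then show "a \<in> (\<lambda>x. insert x b) ` addable n b"
      using \<open>a \<in> Q n\<close> by (auto simp: addable_def insert_absorb)
  qed
  have "card {a \<in> X. b \<subseteq> a} \<le> card (addable n b)"
    using card_mono[OF _ sub] card_image_le[OF finite_addable] finite_addable
    by (meson finite_imageI le_trans)
  also have "\<dots> \<le> r"
    using card_addable_le[OF bQ refl] cb nr \<open>2 \<le> n\<close> by simp
  finally show "card {a \<in> X. b \<subseteq> a} \<le> r" .
qed

lemma antichain_raise_level:
  assumes AQ: "A \<subseteq> Q n" and anti: "antichain_fam A"
    and low: "\<forall>a\<in>A. r \<le> card a" and nr: "4 * r + 1 \<le> n"
  shows "\<exists>A'. A' \<subseteq> Q n \<and> antichain_fam A' \<and> card A \<le> card A' \<and> (\<forall>a\<in>A'. r < card a)"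
proof -
  let ?X = "{a\<in>A. card a = r}"
  let ?A' = "{a\<in>A. card a \<noteq> r} \<union> upper_shade n ?X"
  have "\<forall>b\<in>upper_shade n ?X. card b = Suc r \<and> (\<exists>a\<in>A. card a = r \<and> a \<subseteq> b)"
    by (auto simp: upper_shade_def)
  note replace = antichain_replace_level_up[OF anti low this]
  have "card ?X \<le> card (upper_shade n ?X)"
    by (rule card_upper_shade_ge[OF _ _ nr]) (use AQ in auto)
  then have "card A \<le> card ?A'"
    using replace(2) finite_subset[OF AQ finite_Q] finite_upper_shade by (intro card_le_card_exchange)
  moreover have "?A' \<subseteq> Q n" using AQ by (auto simp: upper_shade_def)
  moreover have "\<forall>a\<in>?A'. r < card a" using low by (auto simp: upper_shade_def order_less_le)
  ultimately show ?thesis using replace(1) by blast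
qed

lemma antichain_lower_level:
  assumes AQ: "A \<subseteq> Q n" and anti: "antichain_fam A"
    and high: "\<forall>a\<in>A. card a \<le> r" and nr: "n + 2 \<le> 3 * r" "2 \<le> n"
    and wide: "\<forall>a\<in>A. n \<le> 4 * card a"
  shows "\<exists>A'. A' \<subseteq> Q n \<and> antichain_fam A' \<and> card A \<le> card A' \<and> (\<forall>a\<in>A'. card a < r \<and> n \<le> 4 * card a)"
proof -
  let ?X = "{a\<in>A. card a = r}"
  let ?A' = "{a\<in>A. card a \<noteq> r} \<union> shadow ?X"
  have "\<forall>a\<in>A. finite a \<and> card a \<le> r" using AQ high finite_mem_Q by blast
  moreover have "\<forall>b\<in>shadow ?X. Suc (card b) = r \<and> (\<exists>a\<in>A. card a = r \<and> b \<subseteq> a)"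
    by (auto simp: shadow_def)
  ultimately have replace: "antichain_fam ?A'" "{a\<in>A. card a \<noteq> r} \<inter> shadow ?X = {}"
    by (rule antichain_replace_level_down[OF anti])+
  have "?X \<subseteq> Q n" using AQ by auto
  then have shadow_Q: "shadow ?X \<subseteq> Q n" by (rule shadow_subset_Q)
  have "card ?X \<le> card (shadow ?X)"
    by (rule card_shadow_ge[OF \<open>?X \<subseteq> Q n\<close> _ nr]) auto
  then have "card A \<le> card ?A'"
    using replace(2) finite_subset[OF AQ finite_Q] finite_subset[OF shadow_Q finite_Q]
    by (intro card_le_card_exchange)
  moreover have "?A' \<subseteq> Q n" using AQ shadow_Q by auto
  moreover have "\<forall>a\<in>?A'. card a < r \<and> n \<le> 4 * card a"
  proof
    fix a assume "a \<in> ?A'"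
    then consider "a \<in> A" "card a \<noteq> r" | "Suc (card a) = r" by (auto simp: shadow_def)
    then show "card a < r \<and> n \<le> 4 * card a"
    proof cases
      case 1
      then show ?thesis using high wide by (simp add: order_less_le)
    next
      case 2
      then show ?thesis using nr by linarith
    qed
  qed
  ultimately show ?thesis using replace(1) by blast
qed

lemma antichain_with_levels_above_quarter:
  assumes "A \<subseteq> Q n" "antichain_fam A"
  shows "\<exists>A'. A' \<subseteq> Q n \<and> antichain_fam A' \<and> card A \<le> card A' \<and> (\<forall>a\<in>A'. n \<le> 4 * card a)"
proof -
  have "\<exists>A'. A' \<subseteq> Q n \<and> antichain_fam A' \<and> card A \<le> card A' \<and> (\<forall>a\<in>A'. n \<le> 4 * card a)"
    if "A \<subseteq> Q n" "antichain_fam A" "\<forall>a\<in>A. r \<le> card a" for A r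
    using that
  proof (induction "n - r" arbitrary: A r rule: less_induct)
    case less
    show ?case
    proof (cases "4 * r + 1 \<le> n")
      case True
      then obtain A1 where A1: "A1 \<subseteq> Q n" "antichain_fam A1" "card A \<le> card A1"
          "\<forall>a\<in>A1. Suc r \<le> card a"
        using antichain_raise_level[OF less.prems] by (auto simp: Suc_le_eq)
      have "n - Suc r < n - r" using True by simp
      then obtain A2 where A2: "A2 \<subseteq> Q n" "antichain_fam A2" "card A1 \<le> card A2"
          "\<forall>a\<in>A2. n \<le> 4 * card a"
        using less.hyps[OF _ A1(1,2,4)] by blast
      have "card A \<le> card A2" using A1(3) A2(3) by (rule le_trans)
      then show ?thesis using A2 by blast
    next
      case False
      have "\<forall>a\<in>A. n \<le> 4 * card a"
      proof
        fix a assume "a \<in> A"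
        then show "n \<le> 4 * card a" using less.prems(3) False by fastforce
      qed
      then show ?thesis using less.prems(1,2) by blast
    qed
  qed
  from this[of A 0] show ?thesis using assms by simp
qed

lemma antichain_with_levels_below_third:
  assumes "A \<subseteq> Q n" "antichain_fam A" "\<forall>a\<in>A. n \<le> 4 * card a" "2 \<le> n"
  shows "\<exists>A'. A' \<subseteq> Q n \<and> antichain_fam A' \<and> card A \<le> card A'
    \<and> (\<forall>a\<in>A'. n \<le> 4 * card a \<and> 3 * card a < n + 2)"
proof -
  have "\<exists>A'. A' \<subseteq> Q n \<and> antichain_fam A' \<and> card A \<le> card A'
      \<and> (\<forall>a\<in>A'. n \<le> 4 * card a \<and> 3 * card a < n + 2)"
    if "A \<subseteq> Q n" "antichain_fam A" "\<forall>a\<in>A. n \<le> 4 * card a" "\<forall>a\<in>A. card a \<le> r" for A r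
    using that
  proof (induction r arbitrary: A)
    case 0
    then have "\<forall>a\<in>A. n \<le> 4 * card a \<and> 3 * card a < n + 2" by simp
    then show ?case using "0.prems"(1,2) by blast
  next
    case (Suc r)
    show ?case
    proof (cases "n + 2 \<le> 3 * Suc r")
      case True
      then obtain A1 where A1: "A1 \<subseteq> Q n" "antichain_fam A1" "card A \<le> card A1"
          "\<forall>a\<in>A1. n \<le> 4 * card a" "\<forall>a\<in>A1. card a \<le> r"
        using antichain_lower_level[OF Suc.prems(1,2,4) True \<open>2 \<le> n\<close> Suc.prems(3)]
        by (auto simp: less_Suc_eq_le)
      then obtain A2 where A2: "A2 \<subseteq> Q n" "antichain_fam A2" "card A1 \<le> card A2"
          "\<forall>a\<in>A2. n \<le> 4 * card a \<and> 3 * card a < n + 2"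
        using Suc.IH[OF A1(1,2,4,5)] by blast
      have "card A \<le> card A2" using A1(3) A2(3) by (rule le_trans)
      then show ?thesis using A2 by blast
    next
      case False
      have "\<forall>a\<in>A. n \<le> 4 * card a \<and> 3 * card a < n + 2"
      proof
        fix a assume "a \<in> A"
        then show "n \<le> 4 * card a \<and> 3 * card a < n + 2" using Suc.prems(3,4) False by fastforce
      qed
      then show ?thesis using Suc.prems(1,2) by blast
    qed
  qed
  moreover have "\<forall>a\<in>A. card a \<le> n" using assms(1) card_mem_Q_le by blast
  ultimately show ?thesis using assms by blast
qed

lemma mem_Q'I:
  assumes "a \<in> Q n" "n \<le> 4 * card a" "3 * card a < n + 2"
  shows "a \<in> Q' n"
  unfolding Q'_def
proof (rule UN_I[of "card a"])
  have "real n \<le> real (4 * card a)" "real (3 * card a) < real (n + 2)"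
    using assms(2,3) by (simp_all only: of_nat_le_iff of_nat_less_iff)
  then show "card a \<in> {r. (real n - 1) / 4 < real r \<and> real r < (real n + 2) / 3}"
    by simp
  show "a \<in> Q_level n (card a)" using assms(1) by (simp add: Q_level_def)
qed

theorem mainTheorem11:
  fixes n :: nat and A :: "nat set set"
  assumes "n \<ge> 2" and "A \<subseteq> Q n" and "antichain_fam A"
  shows "\<exists>A'. A' \<subseteq> Q' n \<and> antichain_fam A' \<and> card A \<le> card A'"
proof -
  obtain A1 where A1: "A1 \<subseteq> Q n" "antichain_fam A1" "card A \<le> card A1"
      "\<forall>a\<in>A1. n \<le> 4 * card a"
    using antichain_with_levels_above_quarter[OF assms(2,3)] by blast
  obtain A2 where A2: "A2 \<subseteq> Q n" "antichain_fam A2" "card A1 \<le> card A2"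
      "\<forall>a\<in>A2. n \<le> 4 * card a \<and> 3 * card a < n + 2"
    using antichain_with_levels_below_third[OF A1(1,2,4) assms(1)] by blast
  have "A2 \<subseteq> Q' n" using A2(1,4) mem_Q'I by blast
  then show ?thesis using A1(3) A2(2,3) le_trans by blast
qed

end
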